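(* Let $G$ be a finite graph with minimum degree at least $3$, let $x_0$ be a vertex of $G$, let $P$ be a longest path in $G$ starting at $x_0$, and let $(S,T)$ be the Pósa pair of $P$ (defined in the context). Then $$e(S\cup T)>|S\cup T|,$$ where $e(A)$ denotes the number of edges of the subgraph of $G$ induced by $A$; i.e. the induced subgraph $G(S\cup T)$ has edge density strictly greater than $1$.
   Context: Rotations and Pósa sets: If $Q=x_0x_1\dots x_h$ is a path from $x_0$ and $\{x_h,x_i\}$ is an edge of $G$ for some $i<h-1$, then $Q'=x_0\dots x_i x_h x_{h-1}\dots x_{i+1}$ is again a path from $x_0$ of the same length, said to be obtained from $Q$ by a rotation. For a longest path $P=x_0\dots x_h$ from $x_0$, $S$ is the set consisting of $x_h$ and the endpoints (other than $x_0$) of all paths obtainable from $P$ by any finite sequence of rotations, and $T=N(S)$ is the set of vertices not in $S$ having a neighbor in $S$. *)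

theory Defs
  imports Main
begin

definition simple_graph :: "'a set \<Rightarrow> ('a \<Rightarrow> 'a \<Rightarrow> bool) \<Rightarrow> bool" where
  "simple_graph V E \<longleftrightarrow> finite V \<and> (\<forall>u v. E u v \<longrightarrow> u \<in> V \<and> v \<in> V)
     \<and> (\<forall>u v. E u v \<longrightarrow> E v u) \<and> (\<forall>v. \<not> E v v)"

definition degree :: "'a set \<Rightarrow> ('a \<Rightarrow> 'a \<Rightarrow> bool) \<Rightarrow> 'a \<Rightarrow> nat" where
  "degree V E v = card {u \<in> V. E v u}"

definition min_degree_ge :: "'a set \<Rightarrow> ('a \<Rightarrow> 'a \<Rightarrow> bool) \<Rightarrow> nat \<Rightarrow> bool" where
  "min_degree_ge V E k \<longleftrightarrow> (\<forall>v \<in> V. degree V E v \<ge> k)"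

definition is_path :: "'a set \<Rightarrow> ('a \<Rightarrow> 'a \<Rightarrow> bool) \<Rightarrow> 'a list \<Rightarrow> bool" where
  "is_path V E P \<longleftrightarrow> P \<noteq> [] \<and> distinct P \<and> set P \<subseteq> V
     \<and> (\<forall>i. Suc i < length P \<longrightarrow> E (P ! i) (P ! Suc i))"

definition longest_path_from :: "'a set \<Rightarrow> ('a \<Rightarrow> 'a \<Rightarrow> bool) \<Rightarrow> 'a \<Rightarrow> 'a list \<Rightarrow> bool" where
  "longest_path_from V E x0 P \<longleftrightarrow> is_path V E P \<and> hd P = x0
     \<and> (\<forall>Q. is_path V E Q \<and> hd Q = x0 \<longrightarrow> length Q \<le> length P)"

text \<open>Rotation: Q = x_0..x_h, edge {x_h, x_i} with i < h - 1, gives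
  Q' = x_0..x_i x_h x_{h-1} .. x_{i+1}.\<close>
definition rotation :: "('a \<Rightarrow> 'a \<Rightarrow> bool) \<Rightarrow> 'a list \<Rightarrow> 'a list \<Rightarrow> bool" where
  "rotation E Q Q' \<longleftrightarrow> (\<exists>i. Suc i < length Q - 1 \<and> E (last Q) (Q ! i)
     \<and> Q' = take (Suc i) Q @ rev (drop (Suc i) Q))"

definition posa_S :: "('a \<Rightarrow> 'a \<Rightarrow> bool) \<Rightarrow> 'a list \<Rightarrow> 'a set" where
  "posa_S E P = {last Q | Q. (rotation E)\<^sup>*\<^sup>* P Q}"

definition posa_T :: "'a set \<Rightarrow> ('a \<Rightarrow> 'a \<Rightarrow> bool) \<Rightarrow> 'a list \<Rightarrow> 'a set" where
  "posa_T V E P = {v \<in> V. v \<notin> posa_S E P \<and> (\<exists>s \<in> posa_S E P. E s v)}"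

definition edges_in :: "('a \<Rightarrow> 'a \<Rightarrow> bool) \<Rightarrow> 'a set \<Rightarrow> nat" where
  "edges_in E A = card {{u, v} | u v. u \<in> A \<and> v \<in> A \<and> E u v}"

end

theory Submission
  imports Defs
begin

text \<open>
  Write \<open>H = S \<union> T\<close>. Every vertex of \<open>S\<close> has all its (at least three) neighbours in \<open>H\<close>, and every
  vertex of \<open>T\<close> has one in \<open>S\<close>. Call a vertex of \<open>T\<close> a leaf (\<open>Tleaf\<close>) if it has at most one
  neighbour in \<open>H\<close>, and let \<open>Tcore\<close> be the other vertices of \<open>T\<close>. A leaf adjacent to the endpoint
  of a rotated path must precede it on that path, since otherwise a rotation gives it a second
  neighbour in \<open>S\<close>; so each vertex of \<open>S\<close> has at most one leaf neighbour. Summing degrees in \<open>H\<close>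
  yields \<open>2 e(H) \<ge> 2 |H|\<close>, and equality forces every vertex of \<open>S\<close> to have degree 3 and a leaf
  neighbour, and every vertex of \<open>Tcore\<close> to have degree 2 in \<open>H\<close>, with both neighbours in \<open>S\<close>.

  This configuration is impossible. Let \<open>Score\<close> be the vertices of \<open>S\<close> adjacent to \<open>Tcore\<close>.
  Counting the edges between \<open>Score\<close> and \<open>Tcore\<close>, both sides 2-regular, gives
  \<open>|Score| = |Tcore|\<close>. The number of path neighbours in \<open>H\<close> of a vertex outside \<open>S\<close> does not change
  under rotations (Posa), so on every rotated path each vertex of \<open>Tcore\<close> is a path neighbour of
  exactly one vertex of \<open>Score\<close>; on a path ending in \<open>Score\<close> the endpoint has only its leaf as path
  neighbour and every other vertex of \<open>Score\<close> exactly one path neighbour in \<open>Tcore\<close>, so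
  \<open>|Tcore| = |Score| - 1\<close>. Finally \<open>Tcore\<close> is nonempty: the first vertex of \<open>P\<close> in \<open>H\<close> lies in it.
\<close>

section \<open>Edges of a path\<close>

fun list_edges :: "'a list \<Rightarrow> 'a set set" where
  "list_edges (x # y # zs) = insert {x, y} (list_edges (y # zs))"
| "list_edges _ = {}"

lemma list_edges_Cons: "xs \<noteq> [] \<Longrightarrow> list_edges (x # xs) = insert {x, hd xs} (list_edges xs)"
  by (cases xs) auto

lemma list_edges_append:
  "xs \<noteq> [] \<Longrightarrow> ys \<noteq> [] \<Longrightarrow>
    list_edges (xs @ ys) = list_edges xs \<union> list_edges ys \<union> {{last xs, hd ys}}"
  by (induction xs rule: list_edges.induct) (auto simp: list_edges_Cons)

lemma list_edges_rev [simp]: "list_edges (rev xs) = list_edges xs"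
proof (induction xs)
  case (Cons x xs)
  then show ?case
    by (cases "xs = []") (auto simp: list_edges_append list_edges_Cons last_rev insert_commute)
qed simp

lemma mem_list_edges_iff:
  "e \<in> list_edges xs \<longleftrightarrow> (\<exists>i. Suc i < length xs \<and> e = {xs ! i, xs ! Suc i})"
proof (induction xs rule: list_edges.induct)
  case (1 x y zs)
  show ?case
  proof
    assume "e \<in> list_edges (x # y # zs)"
    with "1.IH" consider "e = {x, y}"
      | i where "Suc i < length (y # zs)" "e = {(y # zs) ! i, (y # zs) ! Suc i}"
      by auto
    then show "\<exists>i. Suc i < length (x # y # zs) \<and> e = {(x # y # zs) ! i, (x # y # zs) ! Suc i}"
      by cases (auto intro: exI[of _ 0] exI[of _ "Suc _"])
  next
    assume "\<exists>i. Suc i < length (x # y # zs) \<and> e = {(x # y # zs) ! i, (x # y # zs) ! Suc i}"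
    then obtain i where "Suc i < length (x # y # zs)" "e = {(x # y # zs) ! i, (x # y # zs) ! Suc i}"
      by blast
    with "1.IH" show "e \<in> list_edges (x # y # zs)"
      by (cases i) auto
  qed
qed auto

lemma list_edges_nthI: "Suc i < length xs \<Longrightarrow> {xs ! i, xs ! Suc i} \<in> list_edges xs"
  by (auto simp: mem_list_edges_iff)

lemma list_edges_mem_set: "{u, v} \<in> list_edges xs \<Longrightarrow> u \<in> set xs"
  by (auto simp: mem_list_edges_iff doubleton_eq_iff)

lemma distinct_list_edges_nth_iff:
  assumes "distinct xs" "i < length xs"
  shows "{xs ! i, t} \<in> list_edges xs \<longleftrightarrow>
    (0 < i \<and> t = xs ! (i - 1)) \<or> (Suc i < length xs \<and> t = xs ! Suc i)"
proof
  assume "{xs ! i, t} \<in> list_edges xs"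
  then obtain j where j: "Suc j < length xs" "{xs ! i, t} = {xs ! j, xs ! Suc j}"
    by (auto simp: mem_list_edges_iff)
  then consider "xs ! i = xs ! j" "t = xs ! Suc j" | "xs ! i = xs ! Suc j" "t = xs ! j"
    by (auto simp: doubleton_eq_iff)
  then show "(0 < i \<and> t = xs ! (i - 1)) \<or> (Suc i < length xs \<and> t = xs ! Suc i)"
    by cases (use assms j in \<open>auto simp: nth_eq_iff_index_eq\<close>)
next
  assume "(0 < i \<and> t = xs ! (i - 1)) \<or> (Suc i < length xs \<and> t = xs ! Suc i)"
  then show "{xs ! i, t} \<in> list_edges xs"
    using assms list_edges_nthI[of "i - 1" xs] list_edges_nthI[of i xs]
    by (auto simp: insert_commute)
qed

lemma distinct_list_edges_last_iff:
  assumes "distinct xs" "2 \<le> length xs"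
  shows "{last xs, t} \<in> list_edges xs \<longleftrightarrow> t = xs ! (length xs - 2)"
proof -
  have "xs \<noteq> []" using assms(2) by auto
  then have "last xs = xs ! (length xs - 1)" "length xs - 1 - 1 = length xs - 2"
    by (auto simp: last_conv_nth)
  then show ?thesis
    using distinct_list_edges_nth_iff[OF assms(1), of "length xs - 1" t] assms by auto
qed

lemma distinct_list_edges_interior:
  assumes "distinct xs" "0 < j" "Suc j < length xs"
  shows "{t. {xs ! j, t} \<in> list_edges xs} = {xs ! (j - 1), xs ! Suc j}"
  using distinct_list_edges_nth_iff[OF assms(1), of j] assms by auto

lemma is_path_iff_list_edges:
  assumes "\<And>u v. E u v \<Longrightarrow> E v u"
  shows "is_path V E xs \<longleftrightarrow>
    xs \<noteq> [] \<and> distinct xs \<and> set xs \<subseteq> V \<and> (\<forall>u v. {u, v} \<in> list_edges xs \<longrightarrow> E u v)"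
  unfolding is_path_def mem_list_edges_iff
  by (auto simp: doubleton_eq_iff dest: assms)

section \<open>Rotations\<close>

definition rotate_at :: "'a list \<Rightarrow> nat \<Rightarrow> 'a list" where
  "rotate_at Q i = take (Suc i) Q @ rev (drop (Suc i) Q)"

lemma rotation_iff_rotate_at:
  "rotation E Q Q' \<longleftrightarrow> (\<exists>i. Suc i < length Q - 1 \<and> E (last Q) (Q ! i) \<and> Q' = rotate_at Q i)"
  by (simp add: rotation_def rotate_at_def)

lemma
  assumes "Suc i < length Q - 1"
  shows length_rotate_at [simp]: "length (rotate_at Q i) = length Q"
    and hd_rotate_at [simp]: "hd (rotate_at Q i) = hd Q"
    and last_rotate_at [simp]: "last (rotate_at Q i) = Q ! Suc i"
    and take_rotate_at: "take (Suc i) (rotate_at Q i) = take (Suc i) Q"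
  using assms by (auto simp: rotate_at_def last_rev hd_drop_conv_nth hd_append)

lemma set_rotate_at [simp]: "set (rotate_at Q i) = set Q"
  by (metis rotate_at_def append_take_drop_id set_append set_rev)

lemma distinct_rotate_at [simp]: "distinct (rotate_at Q i) \<longleftrightarrow> distinct Q"
  by (metis rotate_at_def append_take_drop_id distinct_append distinct_rev set_rev)

lemma list_edges_rotate_at:
  assumes "Suc i < length Q - 1"
  defines "R \<equiv> list_edges (take (Suc i) Q) \<union> list_edges (drop (Suc i) Q)"
  shows "list_edges Q = R \<union> {{Q ! i, Q ! Suc i}}"
    and "list_edges (rotate_at Q i) = R \<union> {{Q ! i, last Q}}"
proof -
  have ne: "take (Suc i) Q \<noteq> []" "drop (Suc i) Q \<noteq> []" using assms by auto
  have "i < length Q" using assms(1) by simp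
  then have ends: "last (take (Suc i) Q) = Q ! i" "hd (drop (Suc i) Q) = Q ! Suc i"
    "hd (rev (drop (Suc i) Q)) = last Q"
    using assms(1) by (simp_all add: take_Suc_conv_app_nth hd_drop_conv_nth hd_rev last_drop)
  show "list_edges Q = R \<union> {{Q ! i, Q ! Suc i}}"
    using list_edges_append[OF ne] ends unfolding R_def by (metis append_take_drop_id)
  show "list_edges (rotate_at Q i) = R \<union> {{Q ! i, last Q}}"
    using list_edges_append[OF ne(1), of "rev (drop (Suc i) Q)"] ne ends
    unfolding R_def rotate_at_def by simp
qed

lemma list_edges_rotate_at_exchanged:
  assumes "distinct Q" "Suc i < length Q - 1"
  defines "R \<equiv> list_edges (take (Suc i) Q) \<union> list_edges (drop (Suc i) Q)"
  shows "{Q ! i, Q ! Suc i} \<notin> R" and "{Q ! i, last Q} \<notin> R"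
proof -
  have disj: "set (take (Suc i) Q) \<inter> set (drop (Suc i) Q) = {}"
    using assms(1) by (metis append_take_drop_id distinct_append)
  have "Q ! i \<in> set (take (Suc i) Q)"
    using assms(2) by (auto simp: in_set_conv_nth intro!: exI[of _ i])
  moreover have "Q ! Suc i \<in> set (drop (Suc i) Q)"
    using assms(2) by (auto simp: in_set_conv_nth intro!: exI[of _ 0])
  ultimately show "{Q ! i, Q ! Suc i} \<notin> R"
    using disj list_edges_mem_set[of "Q ! i" "Q ! Suc i"] list_edges_mem_set[of "Q ! Suc i" "Q ! i"]
    unfolding R_def by (auto simp: insert_commute)
  show "{Q ! i, last Q} \<notin> R"
  proof
    assume "{Q ! i, last Q} \<in> R"
    then have "{last Q, Q ! i} \<in> list_edges Q"
      using list_edges_rotate_at(1)[OF assms(2)] unfolding R_def by (auto simp: insert_commute)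
    then have "Q ! i = Q ! (length Q - 2)"
      using distinct_list_edges_last_iff[OF assms(1)] assms(2) by auto
    then show False using assms by (simp add: nth_eq_iff_index_eq)
  qed
qed

lemma rotations_preserve_prefix:
  assumes "(rotation E)\<^sup>*\<^sup>* P Q"
    and pivot: "\<And>Q i. (rotation E)\<^sup>*\<^sup>* P Q \<Longrightarrow> take k Q = take k P \<Longrightarrow>
      Suc i < length Q - 1 \<Longrightarrow> E (last Q) (Q ! i) \<Longrightarrow> k \<le> Suc i"
  shows "take k Q = take k P"
  using assms(1)
proof (induction rule: rtranclp_induct)
  case (step Q Q')
  then obtain i where i: "Suc i < length Q - 1" "E (last Q) (Q ! i)" "Q' = rotate_at Q i"
    by (auto simp: rotation_iff_rotate_at)
  have "k \<le> Suc i" using pivot[OF step.hyps(1) step.IH i(1,2)] .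
  then have "take k Q' = take k Q"
    using take_rotate_at[OF i(1)] i(3) by (metis min.absorb1 take_take)
  with step.IH show ?case by simp
qed simp

lemma edges_in_handshake:
  assumes "finite A" and sym: "\<And>u v. E u v \<Longrightarrow> E v u" and irrefl: "\<And>v. \<not> E v v"
  shows "2 * edges_in E A = (\<Sum>v\<in>A. card {u \<in> A. E v u})"
proof -
  define D where "D = Sigma A (\<lambda>v. {u \<in> A. E v u})"
  define Es where "Es = {{u, v} | u v. u \<in> A \<and> v \<in> A \<and> E u v}"
  define f :: "'a \<times> 'a \<Rightarrow> 'a set" where "f = (\<lambda>(x, y). {x, y})"
  have "finite D" unfolding D_def using assms by auto
  have Es_image: "Es = f ` D" unfolding Es_def D_def f_def by auto
  have fibre: "card {d \<in> D. f d = e} = 2" if e_in: "e \<in> Es" for e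
  proof -
    obtain a b where ab: "e = {a, b}" "a \<in> A" "b \<in> A" "E a b" using e_in unfolding Es_def by blast
    then have "{d \<in> D. f d = e} = {(a, b), (b, a)}"
      using sym unfolding D_def f_def by (auto simp: doubleton_eq_iff)
    moreover have "a \<noteq> b" using ab irrefl by blast
    ultimately show ?thesis by simp
  qed
  have "(\<Sum>v\<in>A. card {u \<in> A. E v u}) = (\<Sum>d\<in>D. 1)"
    unfolding D_def using assms by simp
  also have "\<dots> = (\<Sum>e\<in>Es. \<Sum>d\<in>{d \<in> D. f d = e}. 1)"
    using sum.group[OF \<open>finite D\<close> _ equalityD2[OF Es_image], of "\<lambda>_. 1::nat"]
      \<open>finite D\<close> Es_image by simp
  also have "\<dots> = (\<Sum>e\<in>Es. 2)" using fibre by (intro sum.cong) auto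
  also have "\<dots> = 2 * edges_in E A" unfolding edges_in_def Es_def by simp
  finally show ?thesis by simp
qed

section \<open>Posa sets of a longest path\<close>

locale longest_path_setting =
  fixes V :: "'a set" and E :: "'a \<Rightarrow> 'a \<Rightarrow> bool" and x0 :: 'a and P :: "'a list"
  assumes graph: "simple_graph V E"
    and min_degree: "min_degree_ge V E 3"
    and x0_in_V: "x0 \<in> V"
    and longest: "longest_path_from V E x0 P"
begin

abbreviation rotated :: "'a list \<Rightarrow> bool" where
  "rotated Q \<equiv> (rotation E)\<^sup>*\<^sup>* P Q"

abbreviation "S \<equiv> posa_S E P"
abbreviation "T \<equiv> posa_T V E P"
abbreviation "H \<equiv> S \<union> T"

abbreviation deg_H :: "'a \<Rightarrow> nat" where
  "deg_H v \<equiv> card {u \<in> H. E v u}"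

definition path_deg_H :: "'a list \<Rightarrow> 'a \<Rightarrow> nat" where
  "path_deg_H Q v = card {u \<in> H. {u, v} \<in> list_edges Q}"

lemma E_sym: "E u v \<Longrightarrow> E v u"
  and E_irrefl: "\<not> E v v"
  and E_in_V: "E u v \<Longrightarrow> u \<in> V \<and> v \<in> V"
  and finite_V: "finite V"
  using graph by (auto simp: simple_graph_def)

lemma three_le_degree: "v \<in> V \<Longrightarrow> 3 \<le> card {u \<in> V. E v u}"
  using min_degree by (auto simp: min_degree_ge_def degree_def)

lemma rotated_path:
  assumes "rotated Q"
  shows "is_path V E Q \<and> hd Q = x0 \<and> length Q = length P \<and> set Q = set P"
  using assms
proof induction
  case base
  then show ?case using longest by (simp add: longest_path_from_def)
next
  case (step Q Q')
  then obtain i where i: "Suc i < length Q - 1" "E (last Q) (Q ! i)" "Q' = rotate_at Q i"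
    by (auto simp: rotation_iff_rotate_at)
  have edges: "\<forall>u v. {u, v} \<in> list_edges Q' \<longrightarrow> E u v"
    using step.IH i list_edges_rotate_at[OF i(1)]
    by (auto simp: is_path_iff_list_edges[OF E_sym] doubleton_eq_iff dest: E_sym)
  have "length Q' = length Q" using i(1,3) by simp
  then have "Q' \<noteq> []" using i(1) by (cases Q') auto
  with edges show ?case
    using step.IH i(3) hd_rotate_at[OF i(1)] length_rotate_at[OF i(1)]
    by (auto simp: is_path_iff_list_edges[OF E_sym])
qed

lemma
  assumes "rotated Q"
  shows rotated_distinct: "distinct Q"
    and rotated_length: "length Q = length P"
    and rotated_set: "set Q = set P"
    and rotated_nth_0: "Q ! 0 = x0"
    and rotated_last: "last Q = Q ! (length Q - 1)"
    and rotated_step: "Suc i < length Q \<Longrightarrow> E (Q ! i) (Q ! Suc i)"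
  using rotated_path[OF assms] by (auto simp: is_path_def hd_conv_nth last_conv_nth)

lemma rotated_edge: "rotated Q \<Longrightarrow> {u, v} \<in> list_edges Q \<Longrightarrow> E u v"
  using rotated_path[of Q] by (auto simp: is_path_iff_list_edges[OF E_sym])

lemma two_le_length_P: "2 \<le> length P"
proof -
  obtain y where "E x0 y"
    using three_le_degree[OF x0_in_V] by (metis (no_types, lifting) Collect_empty_eq card.empty
        not_numeral_le_zero)
  then have "is_path V E [x0, y]"
    using E_in_V E_irrefl by (auto simp: is_path_def nth_Cons split: nat.splits)
  then show ?thesis using longest by (force simp: longest_path_from_def)
qed

lemma rotated_nth_eq_last_iff:
  assumes "rotated Q" "j < length Q"
  shows "Q ! j = last Q \<longleftrightarrow> j = length Q - 1"
proof -
  have "length Q - 1 < length Q" using assms(2) by simp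
  then show ?thesis
    using nth_eq_iff_index_eq[OF rotated_distinct[OF assms(1)] assms(2)] rotated_last[OF assms(1)]
    by simp
qed

lemma rotated_P: "rotated P"
  by (rule rtranclp.rtrancl_refl)

lemma rotated_two_le_length: "rotated Q \<Longrightarrow> 2 \<le> length Q"
  using rotated_length[of Q] two_le_length_P by simp

lemma rotated_last_edge_iff:
  assumes "rotated Q"
  shows "{last Q, t} \<in> list_edges Q \<longleftrightarrow> t = Q ! (length Q - 2)"
  by (rule distinct_list_edges_last_iff[OF rotated_distinct[OF assms] rotated_two_le_length[OF assms]])

lemma rotated_longest: "rotated Q \<Longrightarrow> longest_path_from V E x0 Q"
  using rotated_path[of Q] longest by (auto simp: longest_path_from_def)

lemma neighbour_of_last_in_path:
  assumes "rotated Q" "E (last Q) y"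
  shows "y \<in> set Q"
proof (rule ccontr)
  assume y: "y \<notin> set Q"
  have Q: "is_path V E Q" "hd Q = x0" using rotated_path[OF assms(1)] by auto
  then have "Q \<noteq> []" by (auto simp: is_path_def)
  then have "is_path V E (Q @ [y])" "hd (Q @ [y]) = x0"
    using Q y assms(2) E_in_V[OF assms(2)] list_edges_append[of Q "[y]"]
    by (auto simp: is_path_iff_list_edges[OF E_sym] doubleton_eq_iff dest: E_sym)
  then show False
    using rotated_longest[OF assms(1)] by (fastforce simp: longest_path_from_def)
qed

lemma S_iff: "s \<in> S \<longleftrightarrow> (\<exists>Q. rotated Q \<and> last Q = s)"
  by (auto simp: posa_S_def)

lemma T_iff: "t \<in> T \<longleftrightarrow> t \<in> V \<and> t \<notin> S \<and> (\<exists>s\<in>S. E s t)"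
  by (auto simp: posa_T_def)

lemma T_notin_S: "t \<in> T \<Longrightarrow> t \<notin> S"
  by (simp add: T_iff)

lemma S_subset_set_P: "S \<subseteq> set P"
proof
  fix s assume "s \<in> S"
  then obtain Q where Q: "rotated Q" "last Q = s" by (auto simp: S_iff)
  then have "Q \<noteq> []" using rotated_path[OF Q(1)] by (simp add: is_path_def)
  then show "s \<in> set P" using Q rotated_set by (metis last_in_set)
qed

lemma H_subset_V: "H \<subseteq> V"
proof -
  have "set P \<subseteq> V" using longest by (simp add: longest_path_from_def is_path_def)
  then show ?thesis using S_subset_set_P by (auto simp: T_iff)
qed

lemma finite_H: "finite H"
  using H_subset_V finite_V finite_subset by blast

lemma neighbour_of_S_in_H: "s \<in> S \<Longrightarrow> E s u \<Longrightarrow> u \<in> H"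
  using E_in_V by (auto simp: T_iff)

lemma deg_H_S:
  assumes "s \<in> S"
  shows "3 \<le> deg_H s"
proof -
  have "{u \<in> H. E s u} = {u \<in> V. E s u}"
    using neighbour_of_S_in_H[OF assms] E_in_V by auto
  then show ?thesis using three_le_degree assms S_subset_set_P H_subset_V by auto
qed

lemma deg_H_T:
  assumes "t \<in> T"
  shows "1 \<le> deg_H t"
proof -
  obtain s where "s \<in> S" "E s t" using assms by (auto simp: T_iff)
  then have "s \<in> {u \<in> H. E t u}" using E_sym by simp
  then show ?thesis using finite_H by (auto simp: Suc_le_eq card_gt_0_iff)
qed

lemma x0_notin_S: "x0 \<notin> S"
proof
  assume "x0 \<in> S"
  then obtain Q where Q: "rotated Q" "last Q = x0" by (auto simp: S_iff)
  then have "Q ! (length Q - 1) = Q ! 0"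
    using rotated_last rotated_nth_0 by simp
  moreover have "length Q - 1 < length Q" "0 < length Q" "length Q - 1 \<noteq> 0"
    using rotated_length[OF Q(1)] two_le_length_P by auto
  ultimately show False
    using rotated_distinct[OF Q(1)] by (simp add: nth_eq_iff_index_eq)
qed

lemma rotate_at_neighbour_of_last:
  assumes "rotated Q" "E (last Q) y" "y \<noteq> Q ! (length Q - 2)"
  obtains i where "Suc i < length Q - 1" "Q ! i = y" "Q ! Suc i \<in> S"
proof -
  obtain i where i: "i < length Q" "Q ! i = y"
    using neighbour_of_last_in_path[OF assms(1,2)] by (auto simp: in_set_conv_nth)
  have "i \<noteq> length Q - 1" using i assms(2) E_irrefl rotated_last[OF assms(1)] by auto
  then have si: "Suc i < length Q - 1" using i assms(3) by (cases "i = length Q - 2") auto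
  then have "rotation E Q (rotate_at Q i)" using assms(2) i by (auto simp: rotation_iff_rotate_at)
  then have "rotated (rotate_at Q i)" using assms(1) by (meson rtranclp.rtrancl_into_rtrancl)
  then have "Q ! Suc i \<in> S" using last_rotate_at[OF si] unfolding S_iff by blast
  then show thesis using that si i by blast
qed

text \<open>The rotation replaces the path edge \<open>{Q!i, Q!Suc i}\<close> by \<open>{Q!i, last Q}\<close>, and both
  \<open>Q!Suc i\<close> and \<open>last Q\<close> lie in \<open>S\<close>.\<close>
lemma path_deg_H_rotate_at:
  assumes Q: "rotated Q" and i: "Suc i < length Q - 1" "E (last Q) (Q ! i)"
    and succ_S: "Q ! Suc i \<in> S" and v: "v \<notin> S"
  shows "path_deg_H (rotate_at Q i) v = path_deg_H Q v"
proof -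
  define R where "R = list_edges (take (Suc i) Q) \<union> list_edges (drop (Suc i) Q)"
  define y y' e where "y = Q ! i" and "y' = Q ! Suc i" and "e = last Q"
  have edges: "list_edges Q = R \<union> {{y, y'}}" "list_edges (rotate_at Q i) = R \<union> {{y, e}}"
    using list_edges_rotate_at[OF i(1)] unfolding R_def y_def y'_def e_def by simp_all
  have fresh: "{y, y'} \<notin> R" "{y, e} \<notin> R"
    using list_edges_rotate_at_exchanged[OF rotated_distinct[OF Q] i(1)]
    unfolding R_def y_def y'_def e_def by simp_all
  have "e \<in> S" using Q unfolding e_def by (auto simp: S_iff)
  have "y' \<in> S" using succ_S unfolding y'_def .
  show ?thesis
  proof (cases "v = y")
    case False
    then have "{u \<in> H. {u, v} \<in> list_edges (rotate_at Q i)} = {u \<in> H. {u, v} \<in> list_edges Q}"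
      using v \<open>e \<in> S\<close> \<open>y' \<in> S\<close> edges by (auto simp: doubleton_eq_iff)
    then show ?thesis by (simp add: path_deg_H_def)
  next
    case True
    define B where "B = {u \<in> H. {u, y} \<in> R}"
    have "finite B" using finite_H by (auto simp: B_def)
    moreover have "{u \<in> H. {u, v} \<in> list_edges Q} = insert y' B"
      "{u \<in> H. {u, v} \<in> list_edges (rotate_at Q i)} = insert e B"
      using True edges \<open>e \<in> S\<close> \<open>y' \<in> S\<close> by (auto simp: B_def doubleton_eq_iff)
    moreover have "y' \<notin> B" "e \<notin> B" using fresh by (auto simp: B_def insert_commute)
    ultimately show ?thesis by (simp add: path_deg_H_def)
  qed
qed

lemma path_deg_H_invariant:
  assumes "rotated Q" "v \<notin> S"
  shows "path_deg_H Q v = path_deg_H P v"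
  using assms(1)
proof induction
  case (step Q Q')
  then obtain i where i: "Suc i < length Q - 1" "E (last Q) (Q ! i)" "Q' = rotate_at Q i"
    by (auto simp: rotation_iff_rotate_at)
  have "rotated Q'" using step.hyps by (meson rtranclp.rtrancl_into_rtrancl)
  then have "Q ! Suc i \<in> S" using i(3) last_rotate_at[OF i(1)] by (metis S_iff)
  then show ?case using path_deg_H_rotate_at[OF step.hyps(1) i(1,2) _ assms(2)] step.IH i(3) by simp
qed simp

lemma one_le_path_deg_H_iff: "1 \<le> path_deg_H Q v \<longleftrightarrow> (\<exists>u\<in>H. {u, v} \<in> list_edges Q)"
proof -
  have "finite {u \<in> H. {u, v} \<in> list_edges Q}" using finite_H by simp
  then show ?thesis by (auto simp: path_deg_H_def Suc_le_eq card_gt_0_iff)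
qed

text \<open>On a rotated path ending at a neighbour \<open>s\<close> of \<open>t\<close>, either \<open>t\<close> precedes \<open>s\<close>
  or rotating at \<open>t\<close> shows that its successor is in \<open>S\<close>; invariance transfers this back to \<open>P\<close>.\<close>
lemma one_le_path_deg_H_T:
  assumes "t \<in> T"
  shows "1 \<le> path_deg_H P t"
proof -
  obtain s where s: "s \<in> S" "E s t" using assms by (auto simp: T_iff)
  then obtain Q where Q: "rotated Q" "last Q = s" by (auto simp: S_iff)
  have "E (last Q) t" using s Q(2) by simp
  have "\<exists>u\<in>H. {u, t} \<in> list_edges Q"
  proof (cases "t = Q ! (length Q - 2)")
    case True
    then have "{last Q, t} \<in> list_edges Q" using rotated_last_edge_iff[OF Q(1)] by simp
    then show ?thesis using s(1) Q(2) by blast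
  next
    case False
    then obtain i where "Suc i < length Q - 1" "Q ! i = t" "Q ! Suc i \<in> S"
      using rotate_at_neighbour_of_last[OF Q(1) \<open>E (last Q) t\<close>] by blast
    then have "{Q ! Suc i, t} \<in> list_edges Q"
      using list_edges_nthI[of i Q] by (simp add: insert_commute)
    then show ?thesis using \<open>Q ! Suc i \<in> S\<close> by blast
  qed
  then have "1 \<le> path_deg_H Q t" by (simp only: one_le_path_deg_H_iff)
  moreover have "t \<notin> S" using assms by (simp add: T_iff)
  ultimately show ?thesis using path_deg_H_invariant[OF Q(1)] by simp
qed

abbreviation "Tleaf \<equiv> {t \<in> T. deg_H t \<le> 1}"
abbreviation "Tcore \<equiv> T - Tleaf"

lemma leaf_H_neighbour_unique:
  assumes "t \<in> Tleaf" "u \<in> H" "E t u" "u' \<in> H" "E t u'"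
  shows "u = u'"
proof -
  have "finite {w \<in> H. E t w}" using finite_H by simp
  then show ?thesis using assms card_le_Suc0_iff_eq[of "{w \<in> H. E t w}"] by auto
qed

lemma leaf_neighbour_of_last:
  assumes Q: "rotated Q" and t: "t \<in> Tleaf" "E (last Q) t"
  shows "t = Q ! (length Q - 2)"
proof (rule ccontr)
  assume "t \<noteq> Q ! (length Q - 2)"
  then obtain i where i: "Suc i < length Q - 1" "Q ! i = t" "Q ! Suc i \<in> S"
    using rotate_at_neighbour_of_last[OF Q t(2)] by blast
  have "Q ! Suc i \<noteq> last Q" using rotated_nth_eq_last_iff[OF Q, of "Suc i"] i(1) by simp
  moreover have "last Q \<in> S" using Q by (auto simp: S_iff)
  moreover have "E t (Q ! Suc i)" using rotated_step[OF Q, of i] i(1,2) by simp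
  ultimately show False
    using leaf_H_neighbour_unique[OF t(1), of "Q ! Suc i" "last Q"] i(3) E_sym[OF t(2)] by simp
qed

lemma leaf_path_adjacent:
  assumes "t \<in> Tleaf" "s \<in> S" "E s t" "rotated Q"
  shows "{s, t} \<in> list_edges Q"
proof -
  have "t \<notin> S" using assms(1) by (simp add: T_iff)
  then have "1 \<le> path_deg_H Q t"
    using path_deg_H_invariant[OF assms(4)] one_le_path_deg_H_T assms(1) by simp
  then obtain u where "u \<in> H" "{u, t} \<in> list_edges Q"
    unfolding one_le_path_deg_H_iff by blast
  moreover have "E t u" using calculation(2) rotated_edge[OF assms(4)] by (simp add: insert_commute)
  ultimately have "u = s"
    using leaf_H_neighbour_unique[OF assms(1), of u s] assms(2) E_sym[OF assms(3)] by simp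
  with \<open>{u, t} \<in> list_edges Q\<close> show ?thesis by simp
qed

lemma leaf_neighbour_of_S_unique:
  assumes "s \<in> S" "l \<in> Tleaf" "E s l" "l' \<in> Tleaf" "E s l'"
  shows "l = l'"
proof -
  obtain Q where Q: "rotated Q" "last Q = s" using assms(1) by (auto simp: S_iff)
  show ?thesis
    using leaf_neighbour_of_last[OF Q(1) assms(2)] leaf_neighbour_of_last[OF Q(1) assms(4)]
      assms(3,5) Q(2) by simp
qed

lemma finite_Tleaf: "finite Tleaf"
  using finite_H by (rule rev_finite_subset) auto

lemma finite_Tcore: "finite Tcore"
  using finite_H by (rule rev_finite_subset) auto

lemma card_Tleaf_le: "card Tleaf \<le> card {s \<in> S. \<exists>t\<in>Tleaf. E s t}"
proof -
  define Sleaf where "Sleaf = {s \<in> S. \<exists>t\<in>Tleaf. E s t}"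
  have "finite Sleaf" using finite_H by (rule rev_finite_subset) (auto simp: Sleaf_def)
  have "finite {t \<in> Tleaf. E s t}" for s using finite_Tleaf by (rule rev_finite_subset) auto
  moreover have "Tleaf \<subseteq> (\<Union>s\<in>Sleaf. {t \<in> Tleaf. E s t})" by (auto simp: Sleaf_def T_iff)
  ultimately have "card Tleaf \<le> card (\<Union>s\<in>Sleaf. {t \<in> Tleaf. E s t})"
    using \<open>finite Sleaf\<close> by (intro card_mono finite_UN_I)
  also have "\<dots> \<le> (\<Sum>s\<in>Sleaf. card {t \<in> Tleaf. E s t})"
    using \<open>finite Sleaf\<close> by (rule card_UN_le)
  also have "\<dots> \<le> (\<Sum>s\<in>Sleaf. 1)"
  proof (rule sum_mono)
    fix s assume "s \<in> Sleaf"
    then have "s \<in> S" by (simp add: Sleaf_def)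
    have "finite {t \<in> Tleaf. E s t}" using finite_Tleaf by (rule rev_finite_subset) auto
    moreover have "\<forall>a\<in>{t \<in> Tleaf. E s t}. \<forall>b\<in>{t \<in> Tleaf. E s t}. a = b"
      using leaf_neighbour_of_S_unique[OF \<open>s \<in> S\<close>] by blast
    ultimately show "card {t \<in> Tleaf. E s t} \<le> 1"
      using card_le_Suc0_iff_eq[of "{t \<in> Tleaf. E s t}"] by simp
  qed
  finally show ?thesis by (simp add: Sleaf_def)
qed

lemma sum_over_H:
  fixes f :: "'a \<Rightarrow> 'b::comm_monoid_add"
  shows "(\<Sum>v\<in>H. f v) = (\<Sum>v\<in>S. f v) + (\<Sum>v\<in>Tleaf. f v) + (\<Sum>v\<in>Tcore. f v)"
proof -
  have "finite S" using finite_H by (rule rev_finite_subset) auto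
  have H_split: "H = S \<union> (Tleaf \<union> Tcore)" by auto
  have disj: "S \<inter> (Tleaf \<union> Tcore) = {}" "Tleaf \<inter> Tcore = {}" using T_notin_S by auto
  have "(\<Sum>v\<in>H. f v) = (\<Sum>v\<in>S \<union> (Tleaf \<union> Tcore). f v)" by (rule arg_cong[OF H_split])
  also have "\<dots> = (\<Sum>v\<in>S. f v) + ((\<Sum>v\<in>Tleaf. f v) + (\<Sum>v\<in>Tcore. f v))"
    using \<open>finite S\<close> finite_Tleaf finite_Tcore disj by (simp only: sum.union_disjoint finite_UnI)
  finally show ?thesis by (simp only: add.assoc)
qed

lemma first_H_vertex:
  obtains f where "f < length P" "P ! f \<in> H" "\<forall>j<f. P ! j \<notin> H"
proof -
  have "last P \<in> S" using rotated_P by (auto simp: S_iff)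
  moreover have "length P - 1 < length P" using two_le_length_P by simp
  ultimately have "\<exists>f. f < length P \<and> P ! f \<in> H"
    using rotated_last[OF rotated_P] by auto
  then obtain f where f: "f < length P" "P ! f \<in> H"
    and least: "\<forall>j<f. \<not> (j < length P \<and> P ! j \<in> H)"
    using exists_least_iff[of "\<lambda>f. f < length P \<and> P ! f \<in> H"] by blast
  have "\<forall>j<f. P ! j \<notin> H" using least f(1) by (meson order.strict_trans)
  with f show thesis by (rule that)
qed

lemma first_H_vertex_notin_S:
  assumes "f < length P" "\<forall>j<f. P ! j \<notin> H"
  shows "P ! f \<notin> S"
proof
  assume S: "P ! f \<in> S"
  show False
  proof (cases f)
    case 0
    then show False using S x0_notin_S rotated_nth_0[OF rotated_P] by simp
  next
    case (Suc g)
    then have "E (P ! f) (P ! g)" using rotated_step[OF rotated_P, of g] assms(1) E_sym by simp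
    then have "P ! g \<in> H" using neighbour_of_S_in_H[OF S] by blast
    then show False using assms(2) Suc by simp
  qed
qed

text \<open>If the first vertex of \<open>P\<close> in \<open>H\<close> were a leaf, its unique neighbour in \<open>H\<close> would be its
  successor, and no rotation could pivot at or before either of them.\<close>
lemma rotations_fix_leaf_prefix:
  assumes before: "\<forall>j<f. P ! j \<notin> H" and leaf: "P ! f \<in> Tleaf"
    and succ: "Suc f < length P" "P ! Suc f \<in> H" "E (P ! f) (P ! Suc f)"
    and Q: "rotated Q"
  shows "take (Suc (Suc f)) Q = take (Suc (Suc f)) P"
  using Q
proof (rule rotations_preserve_prefix)
  fix Q i
  assume Q: "rotated Q" and prefix: "take (Suc (Suc f)) Q = take (Suc (Suc f)) P"
    and i: "Suc i < length Q - 1" "E (last Q) (Q ! i)"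
  have same: "Q ! j = P ! j" if "j \<le> Suc f" for j
    using arg_cong[OF prefix, of "\<lambda>xs. xs ! j"] that by simp
  have "last Q \<in> S" using Q by (auto simp: S_iff)
  then have "Q ! i \<in> H" using neighbour_of_S_in_H i(2) by blast
  have "f \<le> i"
  proof (rule ccontr)
    assume "\<not> f \<le> i"
    then show False using before same[of i] \<open>Q ! i \<in> H\<close> by simp
  qed
  moreover have "i \<noteq> f"
  proof
    assume "i = f"
    then have "E (P ! f) (last Q)" using i(2) same[of f] E_sym by simp
    then have "last Q = Q ! Suc f"
      using leaf_H_neighbour_unique[OF leaf _ _ succ(2,3)] \<open>last Q \<in> S\<close> same[of "Suc f"] by simp
    moreover have "Suc f < length Q" using \<open>i = f\<close> i(1) by simp
    ultimately show False using rotated_nth_eq_last_iff[OF Q, of "Suc f"] \<open>i = f\<close> i(1) by simp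
  qed
  ultimately show "Suc (Suc f) \<le> Suc i" by simp
qed

lemma first_H_vertex_notin_Tleaf:
  assumes f: "f < length P" "\<forall>j<f. P ! j \<notin> H"
  shows "P ! f \<notin> Tleaf"
proof
  assume leaf: "P ! f \<in> Tleaf"
  then obtain s where s: "s \<in> S" "E s (P ! f)" by (auto simp: T_iff)
  have "{P ! f, s} \<in> list_edges P"
    using leaf_path_adjacent[OF leaf s rotated_P] by (simp add: insert_commute)
  then have succ: "Suc f < length P" "P ! Suc f = s"
    using distinct_list_edges_nth_iff[OF rotated_distinct[OF rotated_P] f(1)] f(2) s(1) by auto
  obtain Q where Q: "rotated Q" "last Q = s" using s(1) by (auto simp: S_iff)
  have "P ! Suc f \<in> H" "E (P ! f) (P ! Suc f)" using succ(2) s E_sym[OF s(2)] by simp_all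
  then have prefix: "take (Suc (Suc f)) Q = take (Suc (Suc f)) P"
    using rotations_fix_leaf_prefix[OF f(2) leaf succ(1) _ _ Q(1)] by blast
  have same: "Q ! j = P ! j" if "j \<le> Suc f" for j
    using arg_cong[OF prefix, of "\<lambda>xs. xs ! j"] that by simp
  have "Q ! Suc f = last Q" using same[of "Suc f"] succ(2) Q(2) by simp
  moreover have "Suc f < length Q" using succ(1) rotated_length[OF Q(1)] by simp
  ultimately have len: "length Q = Suc (Suc f)" using rotated_nth_eq_last_iff[OF Q(1)] by simp
  have "{u \<in> V. E s u} \<subseteq> {P ! f}"
  proof
    fix u assume u: "u \<in> {u \<in> V. E s u}"
    then obtain j where j: "j < length Q" "Q ! j = u"
      using neighbour_of_last_in_path[OF Q(1)] Q(2) by (auto simp: in_set_conv_nth)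
    have "u \<in> H" using neighbour_of_S_in_H[OF s(1)] u by simp
    have "f \<le> j"
    proof (rule ccontr)
      assume "\<not> f \<le> j"
      then show False using f(2) same[of j] j(2) \<open>u \<in> H\<close> by simp
    qed
    moreover have "j \<noteq> Suc f" using j u E_irrefl Q(2) rotated_last[OF Q(1)] len by auto
    ultimately have "j = f" using j(1) len by linarith
    then show "u \<in> {P ! f}" using j same by simp
  qed
  then have "card {u \<in> V. E s u} \<le> card {P ! f}" by (intro card_mono) auto
  moreover have "s \<in> V" using s(1) S_subset_set_P H_subset_V by auto
  ultimately show False using three_le_degree[of s] by simp
qed

lemma exists_Tcore: "\<exists>t. t \<in> Tcore"
proof -
  obtain f where f: "f < length P" "P ! f \<in> H" "\<forall>j<f. P ! j \<notin> H" by (rule first_H_vertex)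
  then have "P ! f \<in> T" using first_H_vertex_notin_S[OF f(1,3)] by simp
  moreover have "P ! f \<notin> Tleaf" using first_H_vertex_notin_Tleaf[OF f(1,3)] .
  ultimately show ?thesis by (intro exI DiffI)
qed

subsection \<open>The extremal configuration\<close>

definition extremal :: bool where
  "extremal \<longleftrightarrow> (\<forall>s\<in>S. deg_H s = 3) \<and> (\<forall>t\<in>Tcore. deg_H t = 2) \<and> (\<forall>s\<in>S. \<exists>t\<in>Tleaf. E s t)"

text \<open>Weights \<open>3, 1, 2\<close> on \<open>S, Tleaf, Tcore\<close> are lower bounds for the degrees in \<open>H\<close>, and
  \<open>|Tleaf| \<le> |S|\<close>; so the degree sum is at least \<open>2|H| + (|S| - |Tleaf|)\<close>, with equality only in
  the extremal configuration.\<close>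
lemma extremal_if_sparse:
  assumes sparse: "edges_in E H \<le> card H"
  shows extremal
proof -
  define w where "w v = (if v \<in> S then 3 else if v \<in> Tleaf then 1 else 2::nat)" for v
  define Sleaf where "Sleaf = {s \<in> S. \<exists>t\<in>Tleaf. E s t}"
  have "finite S" using finite_H by (rule rev_finite_subset) auto
  have card_H: "card H = card S + card Tleaf + card Tcore"
    using sum_over_H[of "\<lambda>_. 1::nat"] by simp
  have "(\<Sum>v\<in>S. w v) = 3 * card S" "(\<Sum>v\<in>Tleaf. w v) = card Tleaf"
    "(\<Sum>v\<in>Tcore. w v) = 2 * card Tcore"
    by (simp_all add: w_def T_notin_S)
  then have sum_w: "(\<Sum>v\<in>H. w v) = 3 * card S + card Tleaf + 2 * card Tcore"
    using sum_over_H[of w] by simp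
  have w_le: "w v \<le> deg_H v" if v: "v \<in> H" for v
  proof -
    consider "v \<in> S" | "v \<in> Tleaf" | "v \<in> Tcore" using v by blast
    then show ?thesis
      by cases (use deg_H_S[of v] deg_H_T[of v] T_notin_S[of v] in \<open>auto simp: w_def\<close>)
  qed
  have "card Sleaf \<le> card S" using \<open>finite S\<close> by (intro card_mono) (auto simp: Sleaf_def)
  moreover have "2 * edges_in E H = (\<Sum>v\<in>H. deg_H v)"
    using edges_in_handshake[OF finite_H] E_sym E_irrefl by blast
  moreover have "(\<Sum>v\<in>H. w v) \<le> (\<Sum>v\<in>H. deg_H v)" using w_le by (rule sum_mono)
  ultimately have sums_eq: "(\<Sum>v\<in>H. w v) = (\<Sum>v\<in>H. deg_H v)" and "card Sleaf = card S"
    using sparse card_H sum_w card_Tleaf_le unfolding Sleaf_def by linarith+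
  then have "Sleaf = S" using card_seteq[OF \<open>finite S\<close>, of Sleaf] by (auto simp: Sleaf_def)
  have deg_eq: "deg_H v = w v" if "v \<in> H" for v
    using sum_mono_inv[OF sums_eq w_le that finite_H] by simp
  show extremal
    unfolding extremal_def
  proof (intro conjI ballI)
    fix s assume "s \<in> S"
    then show "deg_H s = 3" using deg_eq[of s] by (simp add: w_def)
    show "\<exists>t\<in>Tleaf. E s t" using \<open>s \<in> S\<close> \<open>Sleaf = S\<close> by (auto simp: Sleaf_def)
  next
    fix t assume "t \<in> Tcore"
    then show "deg_H t = 2" using deg_eq[of t] T_notin_S[of t] by (simp add: w_def)
  qed
qed

lemma
  assumes extremal
  shows extremal_deg_H_S: "s \<in> S \<Longrightarrow> deg_H s = 3"
    and extremal_deg_H_Tcore: "t \<in> Tcore \<Longrightarrow> deg_H t = 2"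
    and extremal_leaf_neighbour: "s \<in> S \<Longrightarrow> \<exists>t\<in>Tleaf. E s t"
  using assms unfolding extremal_def by blast+

lemma extremal_pred_of_last:
  assumes ext: extremal and Q: "rotated Q"
  shows "Q ! (length Q - 2) \<in> Tleaf"
proof -
  have "last Q \<in> S" using Q by (auto simp: S_iff)
  then obtain l where "l \<in> Tleaf" "E (last Q) l" using extremal_leaf_neighbour[OF ext] by blast
  with leaf_neighbour_of_last[OF Q this] show ?thesis by simp
qed

lemma extremal_Tcore_neighbours:
  assumes ext: extremal and t: "t \<in> Tcore" and a: "a \<in> S" "E a t"
  obtains b where "b \<in> S" "b \<noteq> a" "{u \<in> H. E t u} = {a, b}"
proof -
  obtain Q where Q: "rotated Q" "last Q = a" using a(1) by (auto simp: S_iff)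
  have "t \<noteq> Q ! (length Q - 2)" using extremal_pred_of_last[OF ext Q(1)] t by (metis DiffD2)
  moreover have "E (last Q) t" using a(2) Q(2) by simp
  ultimately obtain i where i: "Suc i < length Q - 1" "Q ! i = t" "Q ! Suc i \<in> S"
    using rotate_at_neighbour_of_last[OF Q(1)] by blast
  define b where "b = Q ! Suc i"
  have "b \<noteq> a" using rotated_nth_eq_last_iff[OF Q(1), of "Suc i"] i(1) Q(2) unfolding b_def by simp
  have "E t b" using rotated_step[OF Q(1), of i] i(1,2) unfolding b_def by simp
  then have sub: "{a, b} \<subseteq> {u \<in> H. E t u}" using a i(3) E_sym[OF a(2)] unfolding b_def by simp
  have "finite {u \<in> H. E t u}" using finite_H by simp
  moreover have "deg_H t = 2" using extremal_deg_H_Tcore[OF ext t] .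
  ultimately have "{u \<in> H. E t u} = {a, b}"
    using card_seteq[OF _ sub] \<open>b \<noteq> a\<close> by simp
  then show thesis using that i(3) \<open>b \<noteq> a\<close> unfolding b_def by blast
qed

lemma extremal_path_deg_H_Tcore:
  assumes ext: extremal and t: "t \<in> Tcore" and Q: "rotated Q"
  shows "path_deg_H Q t = 1"
proof -
  obtain a where a: "a \<in> S" "E a t" using t by (auto simp: T_iff)
  obtain Qa where Qa: "rotated Qa" "last Qa = a" using a(1) by (auto simp: S_iff)
  obtain b where "b \<in> S" "b \<noteq> a" and b: "{u \<in> H. E t u} = {a, b}"
    by (rule extremal_Tcore_neighbours[OF ext t a])
  have "{u \<in> H. {u, t} \<in> list_edges Qa} \<subseteq> {b}"
  proof
    fix u assume u: "u \<in> {u \<in> H. {u, t} \<in> list_edges Qa}"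
    then have "E t u" using rotated_edge[OF Qa(1), of t u] by (simp add: insert_commute)
    then have "u = a \<or> u = b" using u b by blast
    moreover have "u \<noteq> a"
    proof
      assume "u = a"
      then have "t = Qa ! (length Qa - 2)" using u Qa(2) rotated_last_edge_iff[OF Qa(1)] by simp
      then show False using extremal_pred_of_last[OF ext Qa(1)] t by simp
    qed
    ultimately show "u \<in> {b}" by simp
  qed
  then have "card {u \<in> H. {u, t} \<in> list_edges Qa} \<le> card {b}" by (intro card_mono) simp_all
  then have "path_deg_H Qa t \<le> 1" by (simp add: path_deg_H_def)
  moreover have "t \<notin> S" using t T_notin_S by blast
  ultimately show ?thesis
    using path_deg_H_invariant[OF Qa(1)] path_deg_H_invariant[OF Q] one_le_path_deg_H_T[of t] t
    by simp
qed

lemma extremal_S_neighbour_of_S: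
  assumes ext: extremal and s: "s \<in> S" and q: "q \<in> S" "E s q"
  obtains y where "y \<in> S" "y \<noteq> q" "E s y"
proof -
  obtain Q where Q: "rotated Q" "last Q = q" using q(1) by (auto simp: S_iff)
  have "s \<noteq> Q ! (length Q - 2)" using extremal_pred_of_last[OF ext Q(1)] s T_notin_S by blast
  moreover have "E (last Q) s" using E_sym[OF q(2)] Q(2) by simp
  ultimately obtain i where i: "Suc i < length Q - 1" "Q ! i = s" "Q ! Suc i \<in> S"
    using rotate_at_neighbour_of_last[OF Q(1)] by blast
  have "Q ! Suc i \<noteq> q" using rotated_nth_eq_last_iff[OF Q(1), of "Suc i"] i(1) Q(2) by simp
  moreover have "E s (Q ! Suc i)" using rotated_step[OF Q(1), of i] i(1,2) by simp
  ultimately show thesis using that i(3) by blast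
qed

lemma extremal_S_neighbours:
  assumes ext: extremal and s: "s \<in> S" and p: "p \<in> Tcore" "E s p"
  obtains l q where "l \<in> Tleaf" "q \<in> Tcore" "q \<noteq> p" "{u \<in> H. E s u} = {l, p, q}"
proof -
  define N where "N = {u \<in> H. E s u}"
  have "finite N" using finite_H by (simp add: N_def)
  have "card N = 3" using extremal_deg_H_S[OF ext s] by (simp add: N_def)
  obtain l where l: "l \<in> Tleaf" "E s l" using extremal_leaf_neighbour[OF ext s] by blast
  then have "l \<noteq> p" "l \<in> N" "p \<in> N" using p unfolding N_def by auto
  have "\<not> N \<subseteq> {l, p}"
  proof
    assume "N \<subseteq> {l, p}"
    then have "card N \<le> card {l, p}" by (intro card_mono) simp_all
    then show False using \<open>card N = 3\<close> \<open>l \<noteq> p\<close> by simp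
  qed
  then obtain q where q: "q \<in> N" "q \<noteq> l" "q \<noteq> p" by blast
  have "{l, p, q} \<subseteq> N" using \<open>l \<in> N\<close> \<open>p \<in> N\<close> q(1) by simp
  moreover have "card N \<le> card {l, p, q}" using \<open>card N = 3\<close> \<open>l \<noteq> p\<close> q(2,3) by simp
  ultimately have N_eq: "N = {l, p, q}" using card_seteq[OF \<open>finite N\<close>] by blast
  have "q \<notin> Tleaf"
  proof
    assume "q \<in> Tleaf"
    moreover have "E s q" using q(1) unfolding N_def by simp
    ultimately have "l = q" using leaf_neighbour_of_S_unique[OF s l] by blast
    then show False using q(2) by simp
  qed
  moreover have "q \<notin> S"
  proof
    assume "q \<in> S"
    then obtain y where "y \<in> S" "y \<noteq> q" "E s y"
      using extremal_S_neighbour_of_S[OF ext s] q(1) unfolding N_def by blast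
    then have "y \<in> {l, p}" using neighbour_of_S_in_H[OF s] N_eq unfolding N_def by blast
    then show False using \<open>y \<in> S\<close> l(1) p(1) T_notin_S by blast
  qed
  ultimately have "q \<in> Tcore" using q(1) unfolding N_def by blast
  then show thesis using that l(1) q(3) N_eq unfolding N_def by blast
qed

lemma path_neighbours_of_S:
  assumes Q: "rotated Q" and s: "s \<in> S" "s \<noteq> last Q"
  obtains A B where "A \<noteq> B" "{t. {s, t} \<in> list_edges Q} = {A, B}"
proof -
  have "s \<in> set Q" using s(1) S_subset_set_P rotated_set[OF Q] by blast
  then obtain j where j: "j < length Q" "Q ! j = s" by (auto simp: in_set_conv_nth)
  have "0 < j"
  proof (rule ccontr)
    assume "\<not> 0 < j"
    then have "s = x0" using j(2) rotated_nth_0[OF Q] by simp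
    then show False using x0_notin_S s(1) by simp
  qed
  have "j \<noteq> length Q - 1" using s(2) j rotated_nth_eq_last_iff[OF Q j(1)] by simp
  with j(1) have "Suc j < length Q" by linarith
  then have "Q ! (j - 1) \<noteq> Q ! Suc j"
    using nth_eq_iff_index_eq[OF rotated_distinct[OF Q]] by simp
  moreover have "{t. {s, t} \<in> list_edges Q} = {Q ! (j - 1), Q ! Suc j}"
    using distinct_list_edges_interior[OF rotated_distinct[OF Q] \<open>0 < j\<close> \<open>Suc j < length Q\<close>] j(2)
    by simp
  ultimately show thesis by (rule that)
qed

lemma extremal_no_path_Tcore_at_last:
  assumes ext: extremal and Q: "rotated Q"
  shows "{t \<in> Tcore. {last Q, t} \<in> list_edges Q} = {}"
proof (rule equals0I)
  fix t assume "t \<in> {t \<in> Tcore. {last Q, t} \<in> list_edges Q}"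
  then have "t \<in> Tcore" "{last Q, t} \<in> list_edges Q" by (simp_all only: mem_Collect_eq)
  then show False using rotated_last_edge_iff[OF Q] extremal_pred_of_last[OF ext Q] by simp
qed

lemma extremal_card_path_Tcore_neighbours:
  assumes ext: extremal and Q: "rotated Q" and s: "s \<in> S" "p \<in> Tcore" "E s p"
    and not_last: "s \<noteq> last Q"
  shows "card {t \<in> Tcore. {s, t} \<in> list_edges Q} = 1"
proof -
  obtain l q where l: "l \<in> Tleaf" and q: "q \<in> Tcore" "q \<noteq> p"
    and N: "{u \<in> H. E s u} = {l, p, q}"
    by (rule extremal_S_neighbours[OF ext s])
  have "l \<in> {u \<in> H. E s u}" by (simp only: N) simp
  then have "E s l" by simp
  obtain A B where "A \<noteq> B" and nbrs: "{t. {s, t} \<in> list_edges Q} = {A, B}"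
    using path_neighbours_of_S[OF Q s(1) not_last] by blast
  have in_N: "t \<in> {l, p, q}" if "t \<in> {A, B}" for t
  proof -
    have "{s, t} \<in> list_edges Q" using that unfolding nbrs[symmetric] by simp
    then have "E s t" by (rule rotated_edge[OF Q])
    then have "t \<in> {u \<in> H. E s u}" using neighbour_of_S_in_H[OF s(1)] by simp
    then show ?thesis by (simp only: N)
  qed
  have "l \<in> {A, B}"
    using leaf_path_adjacent[OF l s(1) \<open>E s l\<close> Q] unfolding nbrs[symmetric] by simp
  have "{t \<in> Tcore. {s, t} \<in> list_edges Q} = {A, B} - {l}"
  proof (intro equalityI subsetI)
    fix t assume t: "t \<in> {t \<in> Tcore. {s, t} \<in> list_edges Q}"
    then have "t \<in> {A, B}" unfolding nbrs[symmetric] by simp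
    moreover have "t \<noteq> l" using t l by blast
    ultimately show "t \<in> {A, B} - {l}" by simp
  next
    fix t assume t: "t \<in> {A, B} - {l}"
    then have "t \<in> {p, q}" using in_N[of t] by simp
    then have "t \<in> Tcore" using s(2) q by blast
    moreover have "{s, t} \<in> list_edges Q" using t unfolding nbrs[symmetric] by simp
    ultimately show "t \<in> {t \<in> Tcore. {s, t} \<in> list_edges Q}" by simp
  qed
  then have "card {t \<in> Tcore. {s, t} \<in> list_edges Q} = card ({A, B} - {l})"
    by (rule arg_cong[where f = card])
  also have "\<dots> = 1" using \<open>l \<in> {A, B}\<close> \<open>A \<noteq> B\<close> by auto
  finally show ?thesis .
qed

abbreviation "Score \<equiv> {s \<in> S. \<exists>t\<in>Tcore. E s t}"

lemma finite_Score: "finite Score"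
  using finite_H by (rule rev_finite_subset) auto

lemma extremal_Tcore_neighbours_in_Score:
  assumes ext: extremal and t: "t \<in> Tcore"
  shows "{s \<in> Score. E s t} = {u \<in> H. E t u}"
proof (intro equalityI subsetI)
  fix s assume "s \<in> {s \<in> Score. E s t}"
  then show "s \<in> {u \<in> H. E t u}" using E_sym by simp
next
  fix u assume u: "u \<in> {u \<in> H. E t u}"
  obtain a where a: "a \<in> S" "E a t" using t by (auto simp: T_iff)
  obtain b where "b \<in> S" "b \<noteq> a" "{u \<in> H. E t u} = {a, b}"
    by (rule extremal_Tcore_neighbours[OF ext t a])
  then have "u \<in> S" using u a(1) by blast
  then show "u \<in> {s \<in> Score. E s t}" using u t E_sym by blast
qed

lemma extremal_card_Score:
  assumes ext: extremal
  shows "card Score = card Tcore"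
proof -
  have "card {t \<in> Tcore. E s t} = 2" if s_in: "s \<in> Score" for s
  proof -
    obtain p where s: "s \<in> S" "p \<in> Tcore" "E s p" using s_in by blast
    obtain l q where l: "l \<in> Tleaf" and q: "q \<in> Tcore" "q \<noteq> p"
      and N: "{u \<in> H. E s u} = {l, p, q}"
      by (rule extremal_S_neighbours[OF ext s])
    have "{t \<in> Tcore. E s t} = {p, q}"
    proof (intro equalityI subsetI)
      fix t assume t: "t \<in> {t \<in> Tcore. E s t}"
      then have "t \<in> {u \<in> H. E s u}" by simp
      then have "t \<in> {l, p, q}" by (simp only: N)
      moreover have "t \<noteq> l" using t l by auto
      ultimately show "t \<in> {p, q}" by simp
    next
      have "q \<in> {u \<in> H. E s u}" by (simp only: N) simp
      then have "E s q" by simp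
      fix t assume "t \<in> {p, q}"
      then show "t \<in> {t \<in> Tcore. E s t}" using s(2,3) q(1) \<open>E s q\<close> by auto
    qed
    then show ?thesis using q(2) by simp
  qed
  then have "(\<Sum>s\<in>Score. card {t \<in> Tcore. E s t}) = (\<Sum>s\<in>Score. 2)"
    by (rule sum.cong[OF refl])
  moreover have "\<forall>t\<in>Tcore. card {s \<in> Score. E s t} = 2"
  proof
    fix t assume t: "t \<in> Tcore"
    show "card {s \<in> Score. E s t} = 2"
      by (simp only: extremal_Tcore_neighbours_in_Score[OF ext t] extremal_deg_H_Tcore[OF ext t])
  qed
  then have "(\<Sum>s\<in>Score. card {t \<in> Tcore. E s t}) = 2 * card Tcore"
    by (rule sum_multicount[OF finite_Score finite_Tcore])
  ultimately show ?thesis by simp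
qed

text \<open>Counting the path edges between \<open>Score\<close> and \<open>Tcore\<close> along a rotated path ending in \<open>Score\<close>:
  each vertex of \<open>Tcore\<close> has exactly one such edge, each vertex of \<open>Score\<close> but the endpoint too.\<close>
lemma extremal_card_Tcore_path:
  assumes ext: extremal and Q: "rotated Q" and a: "last Q \<in> Score"
  shows "card Tcore = card Score - 1"
proof -
  have "card {s \<in> Score. {s, t} \<in> list_edges Q} = 1" if t: "t \<in> Tcore" for t
  proof -
    have "{s \<in> Score. {s, t} \<in> list_edges Q} = {u \<in> H. {u, t} \<in> list_edges Q}"
      using extremal_Tcore_neighbours_in_Score[OF ext t] rotated_edge[OF Q, of t]
      by (auto simp: insert_commute)
    then show ?thesis using extremal_path_deg_H_Tcore[OF ext t Q] by (simp add: path_deg_H_def)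
  qed
  then have "(\<Sum>s\<in>Score. card {t \<in> Tcore. {s, t} \<in> list_edges Q}) = 1 * card Tcore"
    by (intro sum_multicount[OF finite_Score finite_Tcore] ballI)
  moreover have "(\<Sum>s\<in>Score. card {t \<in> Tcore. {s, t} \<in> list_edges Q})
      = card {t \<in> Tcore. {last Q, t} \<in> list_edges Q}
        + (\<Sum>s\<in>Score - {last Q}. card {t \<in> Tcore. {s, t} \<in> list_edges Q})"
    by (rule sum.remove[OF finite_Score a])
  moreover have "card {t \<in> Tcore. {last Q, t} \<in> list_edges Q} = 0"
    by (simp only: extremal_no_path_Tcore_at_last[OF ext Q] card.empty)
  moreover have "(\<Sum>s\<in>Score - {last Q}. card {t \<in> Tcore. {s, t} \<in> list_edges Q})
      = (\<Sum>s\<in>Score - {last Q}. 1)"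
  proof (rule sum.cong[OF refl])
    fix s assume "s \<in> Score - {last Q}"
    then obtain p where "s \<in> S" "p \<in> Tcore" "E s p" "s \<noteq> last Q" by blast
    then show "card {t \<in> Tcore. {s, t} \<in> list_edges Q} = 1"
      by (rule extremal_card_path_Tcore_neighbours[OF ext Q])
  qed
  moreover have "(\<Sum>s\<in>Score - {last Q}. 1 :: nat) = card Score - 1"
    using a finite_Score by simp
  ultimately show ?thesis by linarith
qed

lemma not_extremal: "\<not> extremal"
proof
  assume ext: extremal
  obtain t a where "t \<in> Tcore" "a \<in> S" "E a t" using exists_Tcore by (auto simp: T_iff)
  then have "a \<in> Score" by blast
  moreover obtain Q where "rotated Q" "last Q = a" using \<open>a \<in> S\<close> by (auto simp: S_iff)
  ultimately have "card Tcore = card Score - 1" using extremal_card_Tcore_path[OF ext] by simp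
  moreover have "card Score \<noteq> 0" using \<open>a \<in> Score\<close> finite_Score by auto
  ultimately show False using extremal_card_Score[OF ext] by simp
qed

end

theorem lemma2p1:
  fixes V :: "'a set" and E :: "'a \<Rightarrow> 'a \<Rightarrow> bool" and x0 :: 'a and P :: "'a list"
  assumes "simple_graph V E"
    and "min_degree_ge V E 3"
    and "x0 \<in> V"
    and "longest_path_from V E x0 P"
  shows "edges_in E (posa_S E P \<union> posa_T V E P) > card (posa_S E P \<union> posa_T V E P)"
proof -
  interpret longest_path_setting V E x0 P using assms by unfold_locales
  show ?thesis using extremal_if_sparse not_extremal by (meson not_le)
qed

end
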